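(* For $j\in\mathbb{Z}_{\ge0}$, setting $U_j(x,y)=\sum_{l_1\ge0}\sum_{l_2\ge j}\beta_E(l_1+l_2+1)\beta_E(l_2)x^{l_1}y^{l_2}$ and $B_j(y)=\sum_{l\ge0}\beta_E(l+j)^2y^l$, one has \[ U_j(x,y)=y^j\cdot\frac{(q^{-1}\lambda-q^{-1}x-q^{-2}xy)B_j(y)+\beta_E(j)\beta_E(j+1)-q^{-1}\lambda\,\beta_E(j)^2}{(1-\lambda q^{-1}x+q^{-1}x^2)(1+q^{-1}y)}. \]
   Context: $F$ is a $p$-adic field with odd residue cardinality $q$, uniformizer $\varpi$. $\pi$ is an irreducible unitary unramified representation of $\mathrm{GL}_2(F)$ with trivial central character, a quotient of $\chi\times\chi^{-1}$ with $\chi$ unramified; $\alpha=\chi(\varpi)$, $\lambda=q^{1/2}(\alpha+\alpha^{-1})$. $\phi$ is the spherical unit vector, $E$ a quadratic étale algebra over $F$, $\alpha_E(\phi_1,\phi_2)=\int_{F^\times\backslash E^\times}\langle\pi(t)\phi_1,\phi_2\rangle d^\times t$ with $\alpha_E(\phi,\phi)\ne0$, and $\beta_E(l)=\alpha_E(\pi(\mathrm{diag}(\varpi^{-l},1))\phi,\phi)/\alpha_E(\phi,\phi)$, satisfying $q\beta_E(l+2)-\lambda\beta_E(l+1)+\beta_E(l)=0$. *)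

theory Defs
  imports "HOL-Computational_Algebra.Computational_Algebra" "HOL-Number_Theory.Number_Theory"
begin

text \<open>Two-variable formal power series over the complex numbers are modelled as
  power series in y whose coefficients are power series in x:
  type complex fps fps.  The outer variable is y, the inner one is x.\<close>

definition varX :: "complex fps fps" where
  "varX = fps_const fps_X"

definition varY :: "complex fps fps" where
  "varY = fps_X"

definition cst :: "complex \<Rightarrow> complex fps fps" where
  "cst c = fps_const (fps_const c)"

definition U_ser :: "(nat \<Rightarrow> complex) \<Rightarrow> nat \<Rightarrow> complex fps fps" where
  "U_ser \<beta> j = Abs_fps (\<lambda>l2. if j \<le> l2
       then Abs_fps (\<lambda>l1. \<beta> (l1 + l2 + 1) * \<beta> l2) else 0)"

definition B_ser :: "(nat \<Rightarrow> complex) \<Rightarrow> nat \<Rightarrow> complex fps fps" where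
  "B_ser \<beta> j = Abs_fps (\<lambda>l. fps_const ((\<beta> (l + j))\<^sup>2))"

end

theory Submission
  imports Defs
begin

(* Multiplying the row sum_{l1} \<beta>(l1+l2+1) x^l1 by the characteristic polynomial
  1 - (\<lambda>/q) x + x^2/q of the recurrence leaves only \<beta>(l2+1) - \<beta>(l2) x / q, so U times
  that polynomial is sum_l \<beta>(l) \<beta>(l+1) y^l - (x/q) B.  Multiplying the recurrence by
  \<beta>(l+1) gives \<beta>(l+1) \<beta>(l+2) + \<beta>(l) \<beta>(l+1) / q = (\<lambda>/q) \<beta>(l+1)^2, which turns
  (1 + y/q) sum_l \<beta>(l) \<beta>(l+1) y^l into (\<lambda>/q) B plus a constant.  Replacing \<beta> by
  \<beta>(\<cdot> + j) reduces the general case to j = 0. *)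

lemma fps_mult_1_plus_X_nth:
  fixes f :: "'a::comm_ring_1 fps"
  shows "(f * (1 + fps_const r * fps_X)) $ n = f $ n + (if n = 0 then 0 else r * f $ (n - 1))"
proof -
  have "f * (1 + fps_const r * fps_X) = f + fps_const r * (f * fps_X)"
    by (simp add: algebra_simps)
  then show ?thesis by simp
qed

lemma fps_linear_recurrence_mult:
  fixes a :: "nat \<Rightarrow> 'a::comm_ring_1"
  assumes rec: "\<And>n. a (n + 2) - c * a (n + 1) + d * a n = 0"
  shows "Abs_fps a * (1 - fps_const c * fps_X + fps_const d * fps_X ^ 2)
       = fps_const (a 0) + fps_const (a 1 - c * a 0) * fps_X"
proof (rule fps_ext)
  fix n
  have "Abs_fps a * (1 - fps_const c * fps_X + fps_const d * fps_X ^ 2)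
      = Abs_fps a - fps_const c * (fps_X * Abs_fps a) + fps_const d * (fps_X ^ 2 * Abs_fps a)"
    by (simp add: algebra_simps)
  then have coeff: "(Abs_fps a * (1 - fps_const c * fps_X + fps_const d * fps_X ^ 2)) $ n
      = a n - (if n = 0 then 0 else c * a (n - 1)) + (if n < 2 then 0 else d * a (n - 2))"
    by (simp add: fps_X_power_mult_nth)
  consider "n = 0" | "n = 1" | k where "n = k + 2"
    by (metis One_nat_def add_2_eq_Suc' not0_implies_Suc)
  then show "(Abs_fps a * (1 - fps_const c * fps_X + fps_const d * fps_X ^ 2)) $ n
      = (fps_const (a 0) + fps_const (a 1 - c * a 0) * fps_X) $ n"
  proof cases
    case 1
    then show ?thesis unfolding coeff by simp
  next
    case 2
    then show ?thesis unfolding coeff by simp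
  next
    case 3
    then show ?thesis unfolding coeff using rec[of k] by (simp add: numeral_2_eq_2)
  qed
qed

lemma cst_mult: "cst a * cst b = cst (a * b)"
  by (simp add: cst_def)

lemma U_ser_shift: "U_ser \<beta> j = varY ^ j * U_ser (\<lambda>n. \<beta> (n + j)) 0"
  by (rule fps_ext) (auto simp: U_ser_def varY_def fps_X_power_mult_nth add.assoc)

lemma B_ser_shift: "B_ser \<beta> j = B_ser (\<lambda>n. \<beta> (n + j)) 0"
  by (simp add: B_ser_def)

locale hecke_recurrence =
  fixes Q lam :: complex and \<beta> :: "nat \<Rightarrow> complex"
  assumes Q_nonzero: "Q \<noteq> 0"
    and rec: "\<And>l. Q * \<beta> (l + 2) - lam * \<beta> (l + 1) + \<beta> l = 0"
begin

lemma rec_normalized: "\<beta> (l + 2) - lam / Q * \<beta> (l + 1) + 1 / Q * \<beta> l = 0"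
proof -
  have "\<beta> (l + 2) - lam / Q * \<beta> (l + 1) + 1 / Q * \<beta> l
      = (Q * \<beta> (l + 2) - lam * \<beta> (l + 1) + \<beta> l) / Q"
    using Q_nonzero by (simp add: field_simps)
  then show ?thesis using rec[of l] by simp
qed

lemma rec_products:
  "\<beta> (l + 1) * \<beta> (l + 2) + 1 / Q * (\<beta> l * \<beta> (l + 1)) = lam / Q * (\<beta> (l + 1))\<^sup>2"
proof -
  have "\<beta> (l + 1) * \<beta> (l + 2) + 1 / Q * (\<beta> l * \<beta> (l + 1)) - lam / Q * (\<beta> (l + 1))\<^sup>2
      = \<beta> (l + 1) * (\<beta> (l + 2) - lam / Q * \<beta> (l + 1) + 1 / Q * \<beta> l)"
    by (simp add: algebra_simps power2_eq_square)
  also have "\<dots> = 0"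
    by (simp only: rec_normalized mult_zero_right)
  finally show ?thesis
    by (simp only: right_minus_eq)
qed

lemma U_ser_mult_char_poly:
  "U_ser \<beta> 0 * (1 - cst (lam / Q) * varX + cst (1 / Q) * varX ^ 2)
   = Abs_fps (\<lambda>l. fps_const (\<beta> l * \<beta> (l + 1))) - cst (1 / Q) * varX * B_ser \<beta> 0"
proof -
  define P where "P = 1 - fps_const (lam / Q) * fps_X + fps_const (1 / Q) * (fps_X :: complex fps) ^ 2"
  have P: "1 - cst (lam / Q) * varX + cst (1 / Q) * varX ^ 2 = fps_const P"
    by (simp add: P_def cst_def varX_def fps_const_power)
  have row: "Abs_fps (\<lambda>n. \<beta> (n + l + 1) * \<beta> l) * P
      = fps_const (\<beta> l * \<beta> (l + 1)) - fps_const (1 / Q) * fps_X * fps_const ((\<beta> l)\<^sup>2)" for l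
  proof -
    have "\<beta> (l + 2) - lam / Q * \<beta> (l + 1) = - (1 / Q * \<beta> l)"
      using rec_normalized[of l] by (simp add: algebra_simps)
    then have "Abs_fps (\<lambda>n. \<beta> (n + (l + 1))) * P
        = fps_const (\<beta> (l + 1)) - fps_const (1 / Q * \<beta> l) * fps_X"
      unfolding P_def using rec_normalized
      by (subst fps_linear_recurrence_mult) (simp_all add: add.assoc add.commute[of 1] numeral_2_eq_2)
    moreover have "Abs_fps (\<lambda>n. \<beta> (n + l + 1) * \<beta> l) = fps_const (\<beta> l) * Abs_fps (\<lambda>n. \<beta> (n + (l + 1)))"
      by (simp add: fps_eq_iff add.assoc mult.commute)
    ultimately have "Abs_fps (\<lambda>n. \<beta> (n + l + 1) * \<beta> l) * P
        = fps_const (\<beta> l) * (fps_const (\<beta> (l + 1)) - fps_const (1 / Q * \<beta> l) * fps_X)"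
      by (simp only: mult.assoc)
    then show ?thesis
      by (simp add: algebra_simps power2_eq_square)
  qed
  show ?thesis
    unfolding P by (rule fps_ext) (simp add: U_ser_def B_ser_def cst_def varX_def row[simplified])
qed

lemma products_mult_1_plus_y:
  "Abs_fps (\<lambda>l. fps_const (\<beta> l * \<beta> (l + 1))) * (1 + cst (1 / Q) * varY)
   = cst (lam / Q) * B_ser \<beta> 0 + cst (\<beta> 0 * \<beta> 1 - lam / Q * (\<beta> 0)\<^sup>2)"
proof (rule fps_ext)
  fix n
  show "(Abs_fps (\<lambda>l. fps_const (\<beta> l * \<beta> (l + 1))) * (1 + cst (1 / Q) * varY)) $ n
      = (cst (lam / Q) * B_ser \<beta> 0 + cst (\<beta> 0 * \<beta> 1 - lam / Q * (\<beta> 0)\<^sup>2)) $ n"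
  proof (cases n)
    case (Suc k)
    then show ?thesis
      unfolding cst_def varY_def fps_mult_1_plus_X_nth using rec_products[of k]
      by (simp add: B_ser_def)
  qed (simp add: cst_def varY_def B_ser_def fps_mult_1_plus_X_nth)
qed

lemma U_ser_generating_identity:
  "U_ser \<beta> 0 * ((1 - cst (lam / Q) * varX + cst (1 / Q) * varX ^ 2) * (1 + cst (1 / Q) * varY))
   = (cst (lam / Q) - cst (1 / Q) * varX - cst (1 / Q\<^sup>2) * varX * varY) * B_ser \<beta> 0
     + cst (\<beta> 0 * \<beta> 1 - lam / Q * (\<beta> 0)\<^sup>2)"
proof -
  have "U_ser \<beta> 0 * ((1 - cst (lam / Q) * varX + cst (1 / Q) * varX ^ 2) * (1 + cst (1 / Q) * varY))
      = (Abs_fps (\<lambda>l. fps_const (\<beta> l * \<beta> (l + 1))) - cst (1 / Q) * varX * B_ser \<beta> 0)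
        * (1 + cst (1 / Q) * varY)"
    by (simp only: mult.assoc[symmetric] U_ser_mult_char_poly)
  also have "\<dots> = Abs_fps (\<lambda>l. fps_const (\<beta> l * \<beta> (l + 1))) * (1 + cst (1 / Q) * varY)
      - cst (1 / Q) * varX * B_ser \<beta> 0 * (1 + cst (1 / Q) * varY)"
    by (rule left_diff_distrib)
  also have "\<dots> = cst (lam / Q) * B_ser \<beta> 0 + cst (\<beta> 0 * \<beta> 1 - lam / Q * (\<beta> 0)\<^sup>2)
      - cst (1 / Q) * varX * B_ser \<beta> 0 * (1 + cst (1 / Q) * varY)"
    by (simp only: products_mult_1_plus_y)
  finally show ?thesis
    by (simp add: cst_mult power2_eq_square algebra_simps)
qed

end

theorem proposition4p4:
  fixes q :: nat and alpha lam :: complex and beta :: "nat \<Rightarrow> complex" and j :: nat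
  assumes "odd q" and "\<exists>p k. prime p \<and> k \<ge> 1 \<and> q = p ^ k"
    and "alpha \<noteq> 0"
    and "lam = complex_of_real (sqrt (real q)) * (alpha + inverse alpha)"
    and "beta 0 = 1"
    and rec: "\<And>l. of_nat q * beta (l + 2) - lam * beta (l + 1) + beta l = 0"
  shows "U_ser beta j * ((1 - cst (lam / of_nat q) * varX + cst (1 / of_nat q) * varX ^ 2)
                      * (1 + cst (1 / of_nat q) * varY))
         = varY ^ j * ((cst (lam / of_nat q) - cst (1 / of_nat q) * varX
                         - cst (1 / (of_nat q)\<^sup>2) * varX * varY) * B_ser beta j
                       + cst (beta j * beta (j + 1) - lam / of_nat q * (beta j)\<^sup>2))"
proof -
  \<comment> \<open>The identity is formal in the recurrence: only q \<noteq> 0 is needed from the other hypotheses.\<close>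
  have "of_nat q \<noteq> (0 :: complex)"
    using \<open>odd q\<close> by (auto intro: odd_pos)
  then interpret shifted: hecke_recurrence "of_nat q" lam "\<lambda>n. beta (n + j)"
    using rec by unfold_locales (simp_all add: add.assoc add.commute[of j])
  show ?thesis
    using shifted.U_ser_generating_identity
    by (simp add: U_ser_shift[of beta j] B_ser_shift[of beta j] mult.assoc add.commute[of 1])
qed

end
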